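(* Let $\Omega\subset\mathbb R^n$ be open, $v\colon\Omega\to\mathbb R^n$ a $C^1$ vector field with local flow $\phi$, let $e_1,\dots,e_r\colon\Omega\to\mathbb R$ be continuous, and $E=\bigcap_{k=1}^r\{x\in\Omega: e_k(x)\le0\}$. Suppose that for some (possibly empty) closed subsets $Z_k\subset\partial E$, $k=1,\dots,r$: (a) for each $k$, there is an open neighborhood $W_k$ of the set $\{e_k=0\}\cap\partial E\setminus Z_k$ such that $e_k|_{W_k}$ is a curvature bound function for $v$; (b) $Z_k\subset E^-\cup E^+$ for each $k$. Then $E$ is a bound set for $v$.
   Context: $\phi$ is the local dynamical system generated by $v$: $t\mapsto\phi_t(x_0)$ is the maximal solution of $\dot x=v(x)$ with $x(0)=x_0$. For $E\subset\Omega$, $E^+=\{x\in E:\ \phi_{-\epsilon_n}(x)\notin E$ for some sequence $0<\epsilon_n\to0\}$ (entrance set) and $E^-=\{x\in E:\ \phi_{\epsilon_n}(x)\notin E$ for some sequence $0<\epsilon_n\to0\}$ (exit set); $\partial E$ is the boundary of $E$ in $\Omega$. A closed set $E\subset\Omega$ is a bound set for $v$ if for every $\epsilon>0$ there is no $x\in\partial E$ with $\phi_t(x)\in E$ for all $t\in(-\epsilon,\epsilon)$. For $W\subset\Omega$ open, a $C^2$ function $e\colon W\to\mathbb R$ is a curvature bound function for $v$ if for every $x\in W$ with $e(x)=0$: $De(x)v(x)=0$ implies $v(x)^TD^2e(x)v(x)+De(x)Dv(x)v(x)>0$ ($De$ derivative, $D^2e$ Hessian, $Dv$ Jacobian). 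*)

theory Defs
  imports "HOL-Analysis.Analysis"
begin

definition C1_field_on :: "'a::euclidean_space set \<Rightarrow> ('a \<Rightarrow> 'a) \<Rightarrow> bool" where
  "C1_field_on \<Omega> v \<longleftrightarrow> (\<exists>Dv :: 'a \<Rightarrow> ('a \<Rightarrow>\<^sub>L 'a).
      (\<forall>x\<in>\<Omega>. (v has_derivative blinfun_apply (Dv x)) (at x)) \<and> continuous_on \<Omega> Dv)"

definition ode_solution :: "('a::euclidean_space \<Rightarrow> 'a) \<Rightarrow> 'a set \<Rightarrow> real set \<Rightarrow> (real \<Rightarrow> 'a) \<Rightarrow> bool" where
  "ode_solution v \<Omega> T y \<longleftrightarrow>
     (\<forall>t\<in>T. y t \<in> \<Omega> \<and> (y has_vector_derivative v (y t)) (at t within T))"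

definition existence_ivl :: "('a::euclidean_space \<Rightarrow> 'a) \<Rightarrow> 'a set \<Rightarrow> 'a \<Rightarrow> real set" where
  "existence_ivl v \<Omega> x0 = \<Union>{T. open T \<and> is_interval T \<and> 0 \<in> T \<and>
      (\<exists>y. y 0 = x0 \<and> ode_solution v \<Omega> T y)}"

text \<open>The local flow phi_t(x0): value at time t of the maximal solution through x0
  (well defined for t in the existence interval, by uniqueness for C^1 fields).\<close>
definition flow :: "('a::euclidean_space \<Rightarrow> 'a) \<Rightarrow> 'a set \<Rightarrow> real \<Rightarrow> 'a \<Rightarrow> 'a" where
  "flow v \<Omega> t x0 = (THE z. \<exists>T y. open T \<and> is_interval T \<and> 0 \<in> T \<and> t \<in> T \<and>
      y 0 = x0 \<and> ode_solution v \<Omega> T y \<and> y t = z)"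

definition entrance_set :: "('a::euclidean_space \<Rightarrow> 'a) \<Rightarrow> 'a set \<Rightarrow> 'a set \<Rightarrow> 'a set" where
  "entrance_set v \<Omega> E = {x\<in>E. \<exists>\<epsilon>::nat \<Rightarrow> real. (\<forall>n. 0 < \<epsilon> n) \<and> \<epsilon> \<longlonglongrightarrow> 0 \<and>
      (\<forall>n. - \<epsilon> n \<in> existence_ivl v \<Omega> x \<and> flow v \<Omega> (- \<epsilon> n) x \<notin> E)}"

definition exit_set :: "('a::euclidean_space \<Rightarrow> 'a) \<Rightarrow> 'a set \<Rightarrow> 'a set \<Rightarrow> 'a set" where
  "exit_set v \<Omega> E = {x\<in>E. \<exists>\<epsilon>::nat \<Rightarrow> real. (\<forall>n. 0 < \<epsilon> n) \<and> \<epsilon> \<longlonglongrightarrow> 0 \<and>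
      (\<forall>n. \<epsilon> n \<in> existence_ivl v \<Omega> x \<and> flow v \<Omega> (\<epsilon> n) x \<notin> E)}"

definition bdry_in :: "'a::euclidean_space set \<Rightarrow> 'a set \<Rightarrow> 'a set" where
  "bdry_in \<Omega> E = \<Omega> \<inter> frontier E"

definition bound_set :: "('a::euclidean_space \<Rightarrow> 'a) \<Rightarrow> 'a set \<Rightarrow> 'a set \<Rightarrow> bool" where
  "bound_set v \<Omega> E \<longleftrightarrow> E \<subseteq> \<Omega> \<and> closedin (top_of_set \<Omega>) E \<and>
     (\<forall>\<epsilon>>0. \<not> (\<exists>x\<in>bdry_in \<Omega> E. \<forall>t\<in>{-\<epsilon><..<\<epsilon>}.
         t \<in> existence_ivl v \<Omega> x \<and> flow v \<Omega> t x \<in> E))"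

definition C2_on_with :: "'a::euclidean_space set \<Rightarrow> ('a \<Rightarrow> real) \<Rightarrow> ('a \<Rightarrow> ('a \<Rightarrow>\<^sub>L real))
    \<Rightarrow> ('a \<Rightarrow> ('a \<Rightarrow>\<^sub>L ('a \<Rightarrow>\<^sub>L real))) \<Rightarrow> bool" where
  "C2_on_with W e De D2e \<longleftrightarrow>
     (\<forall>x\<in>W. (e has_derivative blinfun_apply (De x)) (at x) \<and>
             (De has_derivative blinfun_apply (D2e x)) (at x)) \<and> continuous_on W D2e"

definition curvature_bound_function :: "('a::euclidean_space \<Rightarrow> 'a) \<Rightarrow> 'a set \<Rightarrow> 'a set \<Rightarrow> ('a \<Rightarrow> real) \<Rightarrow> bool" where
  "curvature_bound_function v \<Omega> W e \<longleftrightarrow> open W \<and> W \<subseteq> \<Omega> \<and>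
     (\<exists>De D2e. C2_on_with W e De D2e \<and>
        (\<forall>x\<in>W. e x = 0 \<longrightarrow> De x (v x) = 0 \<longrightarrow>
            D2e x (v x) (v x) + De x (frechet_derivative v (at x) (v x)) > 0))"

end

theory Submission
  imports Defs
begin

text \<open>
  Let x be a boundary point of E whose orbit stays in E for t in (-\<epsilon>, \<epsilon>). Some constraint
  e_k is active at x, since otherwise x would be interior. If x lies in Z_k, it is an exit or
  entrance point, so the orbit leaves E at times arbitrarily close to 0. Otherwise
  g(t) = e_k(\<phi>_t(x)) has a local maximum 0 at t = 0, hence g'(0) = De(x) v(x) = 0 and
  g''(0) = v(x)^T D^2e(x) v(x) + De(x) Dv(x) v(x) \<le> 0, contradicting the curvature bound
  condition. Identifying the flow with an arbitrary local solution through x needs uniqueness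
  of solutions, which comes from the local Lipschitz continuity of the C^1 field v.
\<close>

lemma vanishes_if_derivative_bounded_by_norm:
  fixes d :: "real \<Rightarrow> 'b::real_normed_vector"
  assumes der: "\<And>t. t \<in> cball s0 h \<Longrightarrow> (d has_vector_derivative d' t) (at t within cball s0 h)"
    and bound: "\<And>t. t \<in> cball s0 h \<Longrightarrow> norm (d' t) \<le> K * norm (d t)"
    and "0 \<le> K" "K * h < 1" "0 \<le> h" "d s0 = 0" "t \<in> cball s0 h"
  shows "d t = 0"
proof -
  have "continuous_on (cball s0 h) d"
    using der by (metis continuous_on_eq_continuous_within has_vector_derivative_continuous)
  then obtain m where m: "m \<in> cball s0 h" "\<And>s. s \<in> cball s0 h \<Longrightarrow> norm (d s) \<le> norm (d m)"
    using continuous_attains_sup[OF compact_cball, of s0 h "\<lambda>s. norm (d s)"] \<open>0 \<le> h\<close>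
    by (fastforce intro: continuous_on_norm)
  let ?M = "norm (d m)"
  have "norm (d m - d s0) \<le> (K * ?M) * norm (m - s0)"
  proof (rule differentiable_bound[where f'="\<lambda>t u. u *\<^sub>R d' t"])
    fix t assume t: "t \<in> cball s0 h"
    show "(d has_derivative (\<lambda>u. u *\<^sub>R d' t)) (at t within cball s0 h)"
      using der[OF t] unfolding has_vector_derivative_def .
    have "onorm (\<lambda>u::real. u *\<^sub>R d' t) = norm (d' t)"
      using onorm_scaleR_left[OF bounded_linear_ident, of "d' t"] by (simp add: onorm_id)
    also have "\<dots> \<le> K * ?M"
      using bound[OF t] m(2)[OF t] \<open>0 \<le> K\<close> by (meson mult_left_mono order_trans)
    finally show "onorm (\<lambda>u. u *\<^sub>R d' t) \<le> K * ?M" .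
  qed (use m(1) \<open>0 \<le> h\<close> in auto)
  also have "\<dots> \<le> (K * ?M) * h"
    using m(1) \<open>0 \<le> K\<close> by (intro mult_left_mono) (auto simp: dist_norm norm_minus_commute)
  finally have "(1 - K * h) * ?M \<le> 0"
    using \<open>d s0 = 0\<close> by (simp add: algebra_simps)
  then have "?M = 0"
    using \<open>K * h < 1\<close> by (simp add: mult_le_0_iff)
  then show ?thesis
    using m(2)[OF \<open>t \<in> cball s0 h\<close>] by simp
qed

lemma has_real_derivative_along_curve:
  fixes f :: "'a::real_normed_vector \<Rightarrow> real"
  assumes "(y has_vector_derivative w) (at t)" "(f has_derivative f') (at (y t))"
  shows "((\<lambda>s. f (y s)) has_real_derivative f' w) (at t)"
proof -
  have "((f \<circ> y) has_derivative f' \<circ> (\<lambda>s. s *\<^sub>R w)) (at t)"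
    using diff_chain_at assms unfolding has_vector_derivative_def by blast
  moreover have "f' \<circ> (\<lambda>s. s *\<^sub>R w) = (*) (f' w)"
    using has_derivative_linear[OF assms(2)] by (auto simp: linear_scale mult.commute)
  ultimately show ?thesis
    unfolding has_field_derivative_def comp_def by simp
qed

lemma local_max_second_order_necessary:
  fixes g g' :: "real \<Rightarrow> real"
  assumes "\<rho> > 0"
    and der: "\<And>t. \<bar>t - a\<bar> < \<rho> \<Longrightarrow> (g has_real_derivative g' t) (at t)"
    and max: "\<And>t. \<bar>t - a\<bar> < \<rho> \<Longrightarrow> g t \<le> g a"
    and der2: "(g' has_real_derivative c) (at a)"
  shows "g' a = 0" "c \<le> 0"
proof -
  show "g' a = 0"
    using DERIV_local_max[OF der[of a] \<open>\<rho> > 0\<close>] max \<open>\<rho> > 0\<close> by (simp add: abs_minus_commute)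
  show "c \<le> 0"
  proof (rule ccontr)
    assume "\<not> c \<le> 0"
    then obtain d where d: "d > 0" "\<And>h. 0 < h \<Longrightarrow> h < d \<Longrightarrow> g' a < g' (a + h)"
      using DERIV_pos_inc_right[OF der2] by force
    define h where "h = min d \<rho> / 2"
    have h: "0 < h" "h < d" "h < \<rho>"
      using d(1) \<open>\<rho> > 0\<close> by (auto simp: h_def)
    obtain z where z: "a < z" "z < a + h" "g (a + h) - g a = (a + h - a) * g' z"
      using MVT2[of a "a + h" g g'] der h by force
    have "0 < g' z"
      using d(2)[of "z - a"] z h \<open>g' a = 0\<close> by simp
    then have "g a < g (a + h)"
      using z(3) h(1) by (simp add: algebra_simps)
    moreover have "g (a + h) \<le> g a"
      using max h by simp
    ultimately show False
      by simp
  qed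
qed

lemma C1_field_locally_lipschitz:
  assumes "open \<Omega>" "C1_field_on \<Omega> v" "p \<in> \<Omega>"
  obtains \<delta> L where "\<delta> > 0" "cball p \<delta> \<subseteq> \<Omega>" "L-lipschitz_on (cball p \<delta>) v"
proof -
  obtain Dv where Dv: "\<forall>x\<in>\<Omega>. (v has_derivative blinfun_apply (Dv x)) (at x)" "continuous_on \<Omega> Dv"
    using assms(2) unfolding C1_field_on_def by blast
  have lip: "local_lipschitz (UNIV :: real set) \<Omega> (\<lambda>_. v)"
  proof (rule c1_implies_local_lipschitz[where f'="\<lambda>z. Dv (snd z)"])
    show "continuous_on (UNIV \<times> \<Omega>) (\<lambda>z. Dv (snd z))"
      by (rule continuous_on_compose2[OF Dv(2) continuous_on_snd]) auto
  qed (use Dv(1) assms(1) in simp_all)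
  obtain u L where u: "u > 0"
    and "\<And>s::real. s \<in> cball 0 u \<inter> UNIV \<Longrightarrow> L-lipschitz_on (cball p u \<inter> \<Omega>) v"
    by (rule local_lipschitzE[OF lip UNIV_I[of 0] assms(3)]) blast
  then have L: "L-lipschitz_on (cball p u \<inter> \<Omega>) v"
    by (meson centre_in_cball IntI UNIV_I less_imp_le)
  obtain \<delta> where \<delta>: "\<delta> > 0" "cball p \<delta> \<subseteq> \<Omega>"
    using assms(1,3) open_contains_cball by blast
  show thesis
  proof (rule that)
    show "min u \<delta> > 0" "cball p (min u \<delta>) \<subseteq> \<Omega>"
      using u \<delta> by auto
    show "L-lipschitz_on (cball p (min u \<delta>)) v"
      by (rule lipschitz_on_subset[OF L]) (use \<delta>(2) in auto)
  qed
qed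

lemma ode_solution_subset:
  "ode_solution v \<Omega> T y \<Longrightarrow> S \<subseteq> T \<Longrightarrow> ode_solution v \<Omega> S y"
  unfolding ode_solution_def by (meson has_vector_derivative_within_subset subsetD)

lemma ode_solution_at:
  assumes "open T" "ode_solution v \<Omega> T y" "t \<in> T"
  shows "y t \<in> \<Omega>" "(y has_vector_derivative v (y t)) (at t)"
  using assms at_within_open[OF \<open>t \<in> T\<close> \<open>open T\<close>] unfolding ode_solution_def by auto

lemma ode_solutions_locally_agree:
  assumes "open \<Omega>" "C1_field_on \<Omega> v" "open T"
    and y1: "ode_solution v \<Omega> T y1" and y2: "ode_solution v \<Omega> T y2"
    and "s0 \<in> T" "y1 s0 = y2 s0"
  shows "\<exists>h>0. ball s0 h \<subseteq> T \<and> (\<forall>s\<in>ball s0 h. y1 s = y2 s)"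
proof -
  let ?p = "y1 s0"
  obtain \<delta> L where "\<delta> > 0" "cball ?p \<delta> \<subseteq> \<Omega>" and L: "L-lipschitz_on (cball ?p \<delta>) v"
    using C1_field_locally_lipschitz[OF assms(1,2) ode_solution_at(1)[OF assms(3) y1 \<open>s0 \<in> T\<close>]] .
  have near: "\<forall>\<^sub>F s in nhds s0. y s \<in> ball ?p \<delta>" if "ode_solution v \<Omega> T y" "y s0 = ?p" for y
  proof -
    have "isCont y s0"
      using ode_solution_at(2)[OF assms(3) that(1) \<open>s0 \<in> T\<close>] by (rule has_vector_derivative_continuous)
    then obtain d where "d > 0" "\<And>s. dist s s0 < d \<Longrightarrow> dist (y s) (y s0) < \<delta>"
      using \<open>\<delta> > 0\<close> unfolding continuous_at_eps_delta by blast
    then show ?thesis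
      unfolding eventually_nhds_metric using that(2) by (metis dist_commute mem_ball)
  qed
  have "\<forall>\<^sub>F s in nhds s0. s \<in> T \<and> y1 s \<in> ball ?p \<delta> \<and> y2 s \<in> ball ?p \<delta>"
    using eventually_conj[OF eventually_nhds_in_open[OF assms(3) \<open>s0 \<in> T\<close>]
        eventually_conj[OF near[OF y1 refl] near[OF y2 \<open>y1 s0 = y2 s0\<close>[symmetric]]]] .
  then obtain r where r: "r > 0"
    "\<And>s. dist s s0 < r \<Longrightarrow> s \<in> T \<and> y1 s \<in> ball ?p \<delta> \<and> y2 s \<in> ball ?p \<delta>"
    unfolding eventually_nhds_metric by blast
  have "0 \<le> L"
    using L by (rule lipschitz_on_nonneg)
  define h where "h = min (r / 2) (1 / (2 * (L + 1)))"
  have h: "0 < h" "h < r" "L * h < 1"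
  proof -
    show "0 < h" "h < r"
      using r(1) \<open>0 \<le> L\<close> by (auto simp: h_def)
    have "L * h \<le> L * (1 / (2 * (L + 1)))"
      using \<open>0 \<le> L\<close> by (intro mult_left_mono) (auto simp: h_def)
    also have "\<dots> < 1"
      using \<open>0 \<le> L\<close> by (simp add: field_simps)
    finally show "L * h < 1" .
  qed
  have close: "s \<in> T \<and> y1 s \<in> cball ?p \<delta> \<and> y2 s \<in> cball ?p \<delta>" if "s \<in> cball s0 h" for s
  proof -
    have "dist s s0 < r"
      using that h(2) by (simp add: dist_commute)
    then show ?thesis
      using r(2) by (meson ball_subset_cball subsetD)
  qed
  have "y1 s - y2 s = 0" if "s \<in> cball s0 h" for s
  proof (rule vanishes_if_derivative_bounded_by_norm[where d'="\<lambda>t. v (y1 t) - v (y2 t)"])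
    fix t assume t: "t \<in> cball s0 h"
    show "((\<lambda>s. y1 s - y2 s) has_vector_derivative v (y1 t) - v (y2 t)) (at t within cball s0 h)"
      using close[OF t] ode_solution_at(2)[OF assms(3) y1] ode_solution_at(2)[OF assms(3) y2]
      by (blast intro: has_vector_derivative_at_within has_vector_derivative_diff)
    show "norm (v (y1 t) - v (y2 t)) \<le> L * norm (y1 t - y2 t)"
      using close[OF t] by (blast intro: lipschitz_on_normD[OF L])
  qed (use that h \<open>0 \<le> L\<close> \<open>y1 s0 = y2 s0\<close> in simp_all)
  moreover have "ball s0 h \<subseteq> T"
    using close ball_subset_cball by blast
  ultimately show ?thesis
    using h(1) by auto
qed

lemma ode_solutions_unique:
  assumes "open \<Omega>" "C1_field_on \<Omega> v" "open T" "is_interval T"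
    and y1: "ode_solution v \<Omega> T y1" and y2: "ode_solution v \<Omega> T y2"
    and "a \<in> T" "y1 a = y2 a" "t \<in> T"
  shows "y1 t = y2 t"
proof -
  let ?S = "{s\<in>T. y1 s = y2 s}"
  have "open ?S"
    unfolding open_contains_ball
  proof
    fix s assume "s \<in> ?S"
    then obtain h where "h > 0" "ball s h \<subseteq> T" "\<forall>u\<in>ball s h. y1 u = y2 u"
      using ode_solutions_locally_agree[OF assms(1-3) y1 y2] by blast
    then show "\<exists>h>0. ball s h \<subseteq> ?S"
      by blast
  qed
  then have "openin (top_of_set T) ?S"
    by (auto intro: open_subset)
  moreover have "closedin (top_of_set T) ?S"
  proof -
    have "continuous_on T y1" "continuous_on T y2"
      using ode_solution_at(2)[OF assms(3)] y1 y2
      by (metis continuous_at_imp_continuous_on has_vector_derivative_continuous)+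
    then show ?thesis
      using continuous_closedin_preimage_constant[of T "\<lambda>s. y1 s - y2 s" 0]
      by (simp add: continuous_on_diff)
  qed
  ultimately have "?S = T"
    using is_interval_connected[OF assms(4)] \<open>a \<in> T\<close> \<open>y1 a = y2 a\<close>
    unfolding connected_clopen by blast
  then show ?thesis
    using \<open>t \<in> T\<close> by blast
qed

lemma flow_eq_solution:
  assumes "open \<Omega>" "C1_field_on \<Omega> v"
    and "open T" "is_interval T" "0 \<in> T" "t \<in> T" "y 0 = x0" "ode_solution v \<Omega> T y"
  shows "flow v \<Omega> t x0 = y t"
  unfolding flow_def
proof (rule the_equality)
  show "\<exists>T' y'. open T' \<and> is_interval T' \<and> 0 \<in> T' \<and> t \<in> T' \<and> y' 0 = x0 \<and>
      ode_solution v \<Omega> T' y' \<and> y' t = y t"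
    using assms by (intro exI[of _ T] exI[of _ y]) simp
next
  fix z
  assume "\<exists>T' y'. open T' \<and> is_interval T' \<and> 0 \<in> T' \<and> t \<in> T' \<and> y' 0 = x0 \<and>
      ode_solution v \<Omega> T' y' \<and> y' t = z"
  then obtain T' y' where T': "open T'" "is_interval T'" "0 \<in> T'" "t \<in> T'" "y' 0 = x0"
    "ode_solution v \<Omega> T' y'" "y' t = z"
    by blast
  have "y' t = y t"
  proof (rule ode_solutions_unique[of \<Omega> v "T \<inter> T'" _ _ 0])
    show "ode_solution v \<Omega> (T \<inter> T') y'" "ode_solution v \<Omega> (T \<inter> T') y"
      using ode_solution_subset T'(6) assms(8) by blast+
  qed (use assms T' in \<open>auto intro: is_interval_Int\<close>)
  then show "z = y t"
    using T'(7) by simp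
qed

lemma solution_through_orbit_in_set:
  assumes "open \<Omega>" "C1_field_on \<Omega> v" "\<epsilon> > 0"
    and stays: "\<forall>t\<in>{-\<epsilon><..<\<epsilon>}. t \<in> existence_ivl v \<Omega> x \<and> flow v \<Omega> t x \<in> E"
  obtains T y where "open T" "0 \<in> T" "y 0 = x" "ode_solution v \<Omega> T y" "\<forall>\<^sub>F t in nhds 0. y t \<in> E"
proof -
  have "0 \<in> existence_ivl v \<Omega> x"
    using stays \<open>\<epsilon> > 0\<close> by simp
  then obtain T y where T: "open T" "is_interval T" "0 \<in> T" "y 0 = x" "ode_solution v \<Omega> T y"
    unfolding existence_ivl_def by blast
  have inE: "y t \<in> E" if "t \<in> T" "t \<in> ball 0 \<epsilon>" for t
  proof -
    have "t \<in> {-\<epsilon><..<\<epsilon>}"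
      using that(2) by (auto simp: dist_real_def)
    with stays have "flow v \<Omega> t x \<in> E"
      by blast
    then show ?thesis
      using flow_eq_solution[OF assms(1,2) T(1-3) that(1) T(4,5)] by simp
  qed
  have "\<forall>\<^sub>F t in nhds 0. y t \<in> E"
    using eventually_conj[OF eventually_nhds_in_open[OF T(1,3)]
        eventually_nhds_in_open[OF open_ball centre_in_ball[THEN iffD2, OF \<open>\<epsilon> > 0\<close>]]]
    by (rule eventually_mono) (use inE in blast)
  then show thesis
    using that T by blast
qed

lemma closedin_sublevel_Inter:
  fixes e :: "'i \<Rightarrow> 'a::topological_space \<Rightarrow> real"
  assumes "\<And>k. k \<in> K \<Longrightarrow> continuous_on \<Omega> (e k)"
  shows "closedin (top_of_set \<Omega>) {x\<in>\<Omega>. \<forall>k\<in>K. e k x \<le> 0}"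
proof -
  have "{x\<in>\<Omega>. \<forall>k\<in>K. e k x \<le> 0} = \<Inter> (insert \<Omega> ((\<lambda>k. \<Omega> \<inter> e k -` {..0}) ` K))"
    by auto
  also have "closedin (top_of_set \<Omega>) \<dots>"
    by (intro closedin_Inter) (auto intro!: continuous_closedin_preimage assms)
  finally show ?thesis .
qed

lemma bdry_point_has_active_constraint:
  fixes e :: "'i \<Rightarrow> 'a::euclidean_space \<Rightarrow> real"
  assumes "open \<Omega>" "finite K" "\<And>k. k \<in> K \<Longrightarrow> continuous_on \<Omega> (e k)"
    and E: "E = {x\<in>\<Omega>. \<forall>k\<in>K. e k x \<le> 0}"
    and "x \<in> bdry_in \<Omega> E" "x \<in> E"
  shows "\<exists>k\<in>K. e k x = 0"
proof (rule ccontr)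
  assume "\<not> (\<exists>k\<in>K. e k x = 0)"
  with \<open>x \<in> E\<close> have "x \<in> \<Omega> \<inter> (\<Inter>k\<in>K. e k -` {..<0} \<inter> \<Omega>)"
    unfolding E by force
  moreover have "open (\<Omega> \<inter> (\<Inter>k\<in>K. e k -` {..<0} \<inter> \<Omega>))"
    using assms(1-3) continuous_on_open_vimage by (blast intro: open_lessThan)
  moreover have "\<Omega> \<inter> (\<Inter>k\<in>K. e k -` {..<0} \<inter> \<Omega>) \<subseteq> E"
    unfolding E by (auto intro: less_imp_le)
  ultimately have "x \<in> interior E"
    by (meson interior_maximal subsetD)
  then show False
    using \<open>x \<in> bdry_in \<Omega> E\<close> unfolding bdry_in_def frontier_def by blast
qed

lemma exit_or_entrance_point_leaves:
  assumes "x \<in> exit_set v \<Omega> E \<union> entrance_set v \<Omega> E" "\<epsilon> > 0"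
  shows "\<exists>t\<in>{-\<epsilon><..<\<epsilon>}. flow v \<Omega> t x \<notin> E"
proof -
  obtain es :: "nat \<Rightarrow> real" where es: "\<forall>n. 0 < es n" "es \<longlonglongrightarrow> 0"
    and leaves: "(\<forall>n. flow v \<Omega> (es n) x \<notin> E) \<or> (\<forall>n. flow v \<Omega> (- es n) x \<notin> E)"
    using assms(1) unfolding exit_set_def entrance_set_def by blast
  obtain N where "es N < \<epsilon>"
    using order_tendstoD(2)[OF es(2) assms(2)] by (metis eventually_sequentially order_refl)
  then have "es N \<in> {-\<epsilon><..<\<epsilon>}" "- es N \<in> {-\<epsilon><..<\<epsilon>}"
    using es(1) by (smt (verit) greaterThanLessThan_iff)+
  then show ?thesis
    using leaves by blast
qed

lemma curvature_bound_function_not_max_along_solution: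
  assumes "C1_field_on \<Omega> v" "curvature_bound_function v \<Omega> W e"
    and "open T" "0 \<in> T" "ode_solution v \<Omega> T y" "y 0 \<in> W" "e (y 0) = 0"
  shows "\<not> (\<forall>\<^sub>F t in nhds 0. e (y t) \<le> 0)"
proof
  assume "\<forall>\<^sub>F t in nhds 0. e (y t) \<le> 0"
  let ?x = "y 0"
  obtain De D2e where "open W" "W \<subseteq> \<Omega>" and C2: "C2_on_with W e De D2e"
    and curv: "\<And>z. z \<in> W \<Longrightarrow> e z = 0 \<Longrightarrow> De z (v z) = 0 \<Longrightarrow>
        D2e z (v z) (v z) + De z (frechet_derivative v (at z) (v z)) > 0"
    using assms(2) unfolding curvature_bound_function_def by blast
  obtain Dv where Dv: "(v has_derivative blinfun_apply (Dv ?x)) (at ?x)"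
    using assms(1,6) \<open>W \<subseteq> \<Omega>\<close> unfolding C1_field_on_def by blast
  have y': "\<And>t. t \<in> T \<Longrightarrow> (y has_vector_derivative v (y t)) (at t)"
    using ode_solution_at(2)[OF assms(3,5)] .
  have "(y \<longlongrightarrow> ?x) (nhds 0)"
    using has_vector_derivative_continuous[OF y'[OF assms(4)]]
    by (simp add: continuous_at tendsto_at_iff_tendsto_nhds)
  then have "\<forall>\<^sub>F t in nhds 0. y t \<in> W"
    using \<open>open W\<close> assms(6) by (rule topological_tendstoD)
  then have "\<forall>\<^sub>F t in nhds 0. t \<in> T \<and> y t \<in> W \<and> e (y t) \<le> 0"
    using eventually_nhds_in_open[OF assms(3,4)] \<open>\<forall>\<^sub>F t in nhds 0. e (y t) \<le> 0\<close>
    by (simp add: eventually_conj_iff)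
  then obtain \<rho> where "\<rho> > 0" and near: "\<And>t. \<bar>t - 0\<bar> < \<rho> \<Longrightarrow> t \<in> T \<and> y t \<in> W \<and> e (y t) \<le> 0"
    unfolding eventually_nhds_metric dist_real_def by blast
  have g': "((\<lambda>t. e (y t)) has_real_derivative De (y t) (v (y t))) (at t)" if "\<bar>t - 0\<bar> < \<rho>" for t
    using near[OF that] C2 y' by (intro has_real_derivative_along_curve) (auto simp: C2_on_with_def)
  have g'': "((\<lambda>t. De (y t) (v (y t))) has_real_derivative
      D2e ?x (v ?x) (v ?x) + De ?x (Dv ?x (v ?x))) (at 0)"
  proof -
    have y0: "(y has_derivative (\<lambda>s. s *\<^sub>R v ?x)) (at 0)"
      using y'[OF assms(4)] unfolding has_vector_derivative_def .
    have "((\<lambda>t. De (y t)) has_derivative (\<lambda>s. D2e ?x (s *\<^sub>R v ?x))) (at 0)"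
      using diff_chain_at[OF y0] C2 assms(6) unfolding C2_on_with_def comp_def by blast
    moreover have "((\<lambda>t. v (y t)) has_derivative (\<lambda>s. Dv ?x (s *\<^sub>R v ?x))) (at 0)"
      using diff_chain_at[OF y0 Dv] unfolding comp_def .
    ultimately have "((\<lambda>t. De (y t) (v (y t))) has_derivative
        (\<lambda>s. De ?x (Dv ?x (s *\<^sub>R v ?x)) + D2e ?x (s *\<^sub>R v ?x) (v ?x))) (at 0)"
      by (rule blinfun.FDERIV)
    then show ?thesis
      unfolding has_field_derivative_def
      by (rule has_derivative_eq_rhs)
         (simp add: fun_eq_iff blinfun.scaleR_right blinfun.scaleR_left algebra_simps)
  qed
  have "\<And>t. \<bar>t - 0\<bar> < \<rho> \<Longrightarrow> e (y t) \<le> e (y 0)"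
    using near assms(7) by simp
  note second_order = local_max_second_order_necessary[OF \<open>\<rho> > 0\<close> g' this g'']
  have "frechet_derivative v (at ?x) = blinfun_apply (Dv ?x)"
    using Dv by (rule frechet_derivative_at[symmetric])
  then show False
    using curv[OF assms(6,7) second_order(1)] second_order(2) by simp
qed

theorem corollary2p3:
  fixes \<Omega> :: "'a::euclidean_space set" and v :: "'a \<Rightarrow> 'a"
    and e :: "nat \<Rightarrow> 'a \<Rightarrow> real" and r :: nat and Z :: "nat \<Rightarrow> 'a set" and E :: "'a set"
  assumes "open \<Omega>" and "C1_field_on \<Omega> v"
    and "\<And>k. k \<in> {1..r} \<Longrightarrow> continuous_on \<Omega> (e k)"
    and E_def: "E = {x\<in>\<Omega>. \<forall>k\<in>{1..r}. e k x \<le> 0}"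
    and "\<And>k. k \<in> {1..r} \<Longrightarrow> closedin (top_of_set \<Omega>) (Z k) \<and> Z k \<subseteq> bdry_in \<Omega> E"
    and "\<And>k. k \<in> {1..r} \<Longrightarrow> \<exists>W. ({x\<in>\<Omega>. e k x = 0} \<inter> bdry_in \<Omega> E - Z k) \<subseteq> W \<and>
                                   curvature_bound_function v \<Omega> W (e k)"
    and "\<And>k. k \<in> {1..r} \<Longrightarrow> Z k \<subseteq> exit_set v \<Omega> E \<union> entrance_set v \<Omega> E"
  shows "bound_set v \<Omega> E"
proof -
  have closed: "closedin (top_of_set \<Omega>) E"
    unfolding E_def using assms(3) by (rule closedin_sublevel_Inter)
  have False if "\<epsilon> > 0" and x: "x \<in> bdry_in \<Omega> E"
    and stays: "\<forall>t\<in>{-\<epsilon><..<\<epsilon>}. t \<in> existence_ivl v \<Omega> x \<and> flow v \<Omega> t x \<in> E" for \<epsilon> x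
  proof -
    obtain T y where T: "open T" "0 \<in> T" "y 0 = x" "ode_solution v \<Omega> T y"
      and yE: "\<forall>\<^sub>F t in nhds 0. y t \<in> E"
      using solution_through_orbit_in_set[OF assms(1,2) \<open>\<epsilon> > 0\<close> stays] .
    have "x \<in> E"
      using eventually_nhds_x_imp_x[OF yE] T(3) by simp
    then obtain k where k: "k \<in> {1..r}" "e k x = 0"
      using bdry_point_has_active_constraint[OF assms(1) finite_atLeastAtMost assms(3) E_def] x
      by blast
    show False
    proof (cases "x \<in> Z k")
      case True
      then show False
        using exit_or_entrance_point_leaves[OF _ \<open>\<epsilon> > 0\<close>] assms(7)[OF k(1)] stays by blast
    next
      case False
      then obtain W where "x \<in> W" "curvature_bound_function v \<Omega> W (e k)"
        using assms(6)[OF k(1)] k(2) x \<open>x \<in> E\<close> unfolding E_def by blast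
      moreover have "\<forall>\<^sub>F t in nhds 0. e k (y t) \<le> 0"
        using yE by (rule eventually_mono) (use k(1) in \<open>simp add: E_def\<close>)
      ultimately show False
        using curvature_bound_function_not_max_along_solution[OF assms(2) _ T(1,2,4)] T(3) k(2) by blast
    qed
  qed
  moreover have "E \<subseteq> \<Omega>"
    unfolding E_def by blast
  ultimately show ?thesis
    unfolding bound_set_def using closed by blast
qed

end
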